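(* Let $\mathbf H\in\mathbb R^{n\times n}$ be symmetric positive semidefinite with eigenvalues $\lambda_1(\mathbf H)\ge\dots\ge\lambda_n(\mathbf H)\ge0$, let $\Phi(\mathbf M)=\mathbf M-\frac{\mathbf M^2}{\mathrm{tr}(\mathbf M)}$, and let $q\in[n]$ be arbitrary. Then for every $r\in\mathbb N$, $\lambda_1(\Phi^r(\mathbf H))\le\eta(r)$, where $\eta$ is the decreasing solution of the ordinary differential equation $$\frac{d\eta(t)}{dt}=-\frac{\eta(t)^2}{q\,\eta(t)+\sum_{l=q+1}^n\lambda_l(\mathbf H)},\qquad\eta(0)=\lambda_1(\mathbf H).$$
   Context: $\Phi^r$ denotes the $r$-fold composition of $\Phi$, and $\lambda_1$ the largest eigenvalue. *)

theory Defs
  imports Complex_Main "Jordan_Normal_Form.Char_Poly"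
begin

definition psd_mat :: "real mat \<Rightarrow> bool" where
  "psd_mat A \<longleftrightarrow> (\<forall>v \<in> carrier_vec (dim_row A). v \<bullet> (A *\<^sub>v v) \<ge> 0)"

definition lambda_max :: "real mat \<Rightarrow> real" where
  "lambda_max A = Max {k. eigenvalue A k}"

definition mat_trace :: "real mat \<Rightarrow> real" where
  "mat_trace A = (\<Sum>i<dim_row A. A $$ (i, i))"

definition Phi :: "real mat \<Rightarrow> real mat" where
  "Phi M = M - (1 / mat_trace M) \<cdot>\<^sub>m (M * M)"

end

theory Submission
  imports Defs "Jordan_Normal_Form.Schur_Decomposition" "HOL-Analysis.Analysis"
begin

text \<open>
  Triangularise H = P B P^-1 with diagonal lam 1, ..., lam n. Phi is a polynomial in M whose
  only coefficient, 1 / tr M, is a similarity invariant, so Phi^r H = P (Phi^r B) P^-1, and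
  Phi^r B stays upper triangular with diagonal evolving by x_i \<mapsto> x_i - x_i^2 / (x_1 + ... + x_n).
  These entries only decrease, so the entries beyond q keep summing to at most
  S = lam (q+1) + ... + lam n, and the trace is at most q m + S, where m is the largest entry.
  As x - x^2 / T increases on [0, T/2], the new largest entry is at most h m, where
  h x = x - x^2 / (q x + S) is eta_step q S.

  On the other side, V = flow_time q S, i.e. V e = S / e - q ln e, satisfies
  V (eta t) = V (eta 0) + t, and the mean value theorem gives V (h a) \<ge> V a + 1. Since V is
  decreasing, h (eta t) \<le> eta (t + 1), and monotonicity of h compares the two recursions
  step by step.
\<close>

section \<open>Phi on triangular matrices\<close>

lemma mat_trace_mult_comm:
  assumes "A \<in> carrier_mat n m" "B \<in> carrier_mat m n"
  shows "mat_trace (A * B) = mat_trace (B * A)"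
proof -
  have "mat_trace (A * B) = (\<Sum>i<n. \<Sum>k<m. A $$ (i, k) * B $$ (k, i))"
    using assms by (simp add: mat_trace_def scalar_prod_def atLeast0LessThan)
  also have "\<dots> = (\<Sum>k<m. \<Sum>i<n. B $$ (k, i) * A $$ (i, k))"
    by (subst sum.swap) (simp add: mult.commute)
  also have "\<dots> = mat_trace (B * A)"
    using assms by (simp add: mat_trace_def scalar_prod_def atLeast0LessThan)
  finally show ?thesis .
qed

lemma mat_trace_similar:
  assumes "similar_mat_wit A B P Q"
  shows "mat_trace A = mat_trace B"
proof -
  define n where "n = dim_row A"
  note wit = similar_mat_witD[OF n_def assms]
  have "mat_trace A = mat_trace (B * Q * P)"
    using wit by (simp add: mat_trace_mult_comm[of P n n "B * Q"])
  also have "B * Q * P = B"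
    using wit by (simp add: assoc_mult_mat[of B n n Q n P n])
  finally show ?thesis .
qed

lemma similar_mat_wit_minus:
  fixes A :: "'a::comm_ring_1 mat"
  assumes "similar_mat_wit A B P Q" "similar_mat_wit C D P Q"
  shows "similar_mat_wit (A - C) (B - D) P Q"
proof -
  define n where "n = dim_row A"
  note AB = similar_mat_witD[OF n_def assms(1)]
  then have "n = dim_row C"
    using assms(2) unfolding similar_mat_wit_def Let_def by auto
  note CD = similar_mat_witD[OF this assms(2)]
  have "A - C = P * (B - D) * Q"
    using AB CD by (simp add: mult_minus_distrib_mat[of P n n B n D] minus_mult_distrib_mat[of _ n n _ Q n])
  with AB CD show ?thesis
    by (intro similar_mat_witI) auto
qed

lemma similar_mat_wit_mult:
  fixes A :: "'a::comm_ring_1 mat"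
  assumes "similar_mat_wit A B P Q" "similar_mat_wit C D P Q"
  shows "similar_mat_wit (A * C) (B * D) P Q"
proof -
  define n where "n = dim_row A"
  note AB = similar_mat_witD[OF n_def assms(1)]
  then have "n = dim_row C"
    using assms(2) unfolding similar_mat_wit_def Let_def by auto
  note CD = similar_mat_witD[OF this assms(2)]
  have QP_cancel: "Q * (P * X) = X" if "X \<in> carrier_mat n n" for X
    using AB that by (simp add: assoc_mult_mat[symmetric, of Q n n P n X n])
  have "A * C = P * (B * D) * Q"
    using AB CD by (simp add: assoc_mult_mat[of _ n n _ n _ n] QP_cancel)
  then show ?thesis
    using AB CD by (intro similar_mat_witI) auto
qed

lemma similar_mat_wit_Phi:
  assumes "similar_mat_wit A B P Q"
  shows "similar_mat_wit (Phi A) (Phi B) P Q"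
  unfolding Phi_def mat_trace_similar[OF assms]
  by (intro similar_mat_wit_minus similar_mat_wit_smult similar_mat_wit_mult assms)

lemma similar_mat_wit_funpow_Phi:
  assumes "similar_mat_wit A B P Q"
  shows "similar_mat_wit ((Phi ^^ r) A) ((Phi ^^ r) B) P Q"
  by (induction r) (simp_all add: assms similar_mat_wit_Phi)

lemma upper_triangular_mult:
  fixes A B :: "'a::semiring_0 mat"
  assumes A: "A \<in> carrier_mat n n" and B: "B \<in> carrier_mat n n"
    and ut: "upper_triangular A" "upper_triangular B"
  shows "upper_triangular (A * B)"
    and "i < n \<Longrightarrow> (A * B) $$ (i, i) = A $$ (i, i) * B $$ (i, i)"
proof -
  have entry: "(A * B) $$ (i, j) = (\<Sum>k<n. A $$ (i, k) * B $$ (k, j))" if "i < n" "j < n" for i j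
    using A B that by (simp add: scalar_prod_def atLeast0LessThan)
  have A0: "A $$ (i, k) = 0" if "k < i" "i < n" for i k
    using ut(1) A that by (metis upper_triangularD carrier_matD(1))
  have B0: "B $$ (k, j) = 0" if "j < k" "k < n" for k j
    using ut(2) B that by (metis upper_triangularD carrier_matD(1))
  have term_zero: "A $$ (i, k) * B $$ (k, j) = 0"
    if "j < i \<or> (j = i \<and> k \<noteq> i)" "i < n" "k < n" for i j k
    using that A0 B0 by (cases "k < i") auto
  show "upper_triangular (A * B)"
    using A by (intro upper_triangularI) (simp add: entry term_zero)
  assume i: "i < n"
  have "(A * B) $$ (i, i) = (\<Sum>k<n. if k = i then A $$ (i, i) * B $$ (i, i) else 0)"
    unfolding entry[OF i i] using i term_zero by (intro sum.cong) auto
  with i show "(A * B) $$ (i, i) = A $$ (i, i) * B $$ (i, i)"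
    by simp
qed

lemma Phi_upper_triangular:
  assumes U: "U \<in> carrier_mat n n" and ut: "upper_triangular U"
  shows "Phi U \<in> carrier_mat n n" and "upper_triangular (Phi U)"
    and "i < n \<Longrightarrow> Phi U $$ (i, i) = U $$ (i, i) - (U $$ (i, i))\<^sup>2 / (\<Sum>j<n. U $$ (j, j))"
proof -
  note UU = upper_triangular_mult[OF U U ut ut]
  show "Phi U \<in> carrier_mat n n"
    using U by (simp add: Phi_def minus_carrier_mat)
  have "U $$ (i, j) = 0" "(U * U) $$ (i, j) = 0" if "j < i" "i < n" for i j
    using U UU(1) ut that by (metis upper_triangularD carrier_matD(1) mult_carrier_mat)+
  then show "upper_triangular (Phi U)"
    using U by (intro upper_triangularI) (simp add: Phi_def)
  show "i < n \<Longrightarrow> Phi U $$ (i, i) = U $$ (i, i) - (U $$ (i, i))\<^sup>2 / (\<Sum>j<n. U $$ (j, j))"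
    using U UU by (simp add: Phi_def mat_trace_def power2_eq_square)
qed

lemma eigenvalue_upper_triangular_iff:
  fixes U :: "'a::field mat"
  assumes U: "U \<in> carrier_mat n n" and ut: "upper_triangular U"
  shows "eigenvalue U k \<longleftrightarrow> (\<exists>i<n. U $$ (i, i) = k)"
proof -
  have "eigenvalue U k \<longleftrightarrow> poly (\<Prod>a\<leftarrow>diag_mat U. [:- a, 1:]) k = 0"
    by (simp add: eigenvalue_root_char_poly[OF U] char_poly_upper_triangular[OF U ut])
  also have "\<dots> \<longleftrightarrow> k \<in> set (diag_mat U)"
    by (auto simp: poly_prod_list)
  finally show ?thesis
    using U by (auto simp: diag_mat_def)
qed

lemma lambda_max_upper_triangular:
  assumes "U \<in> carrier_mat n n" "upper_triangular U"
  shows "lambda_max U = Max ((\<lambda>i. U $$ (i, i)) ` {..<n})"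
proof -
  have "{k. eigenvalue U k} = (\<lambda>i. U $$ (i, i)) ` {..<n}"
    using eigenvalue_upper_triangular_iff[OF assms] by auto
  then show ?thesis
    by (simp add: lambda_max_def)
qed

lemma lambda_max_similar:
  assumes "similar_mat A B"
  shows "lambda_max A = lambda_max B"
proof -
  obtain n where "A \<in> carrier_mat n n" "B \<in> carrier_mat n n"
    using similar_matD[OF assms] by auto
  then have "eigenvalue A k \<longleftrightarrow> eigenvalue B k" for k
    by (simp add: eigenvalue_root_char_poly char_poly_similar[OF assms])
  then show ?thesis
    by (simp add: lambda_max_def)
qed

lemma schur_decomposition_diag:
  fixes H :: "'a::conjugatable_ordered_field mat"
  assumes H: "H \<in> carrier_mat n n" and cp: "char_poly H = (\<Prod>l=1..n. [:- lam l, 1:])"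
  obtains B P Q where "similar_mat_wit H B P Q" "B \<in> carrier_mat n n" "upper_triangular B"
    "\<And>i. i < n \<Longrightarrow> B $$ (i, i) = lam (Suc i)"
proof -
  define es where "es = map lam [1..<Suc n]"
  have "(\<Prod>l=1..n. [:- lam l, 1:]) = (\<Prod>l\<in>set [1..<Suc n]. [:- lam l, 1:])"
    by (simp only: set_upt atLeastLessThanSuc_atLeastAtMost)
  also have "\<dots> = (\<Prod>e\<leftarrow>es. [:- e, 1:])"
    unfolding es_def by (subst prod.distinct_set_conv_list) (simp_all del: upt_Suc add: o_def)
  finally have "char_poly H = (\<Prod>e\<leftarrow>es. [:- e, 1:])"
    unfolding cp .
  moreover obtain B P Q where "schur_decomposition H es = (B, P, Q)"
    by (cases "schur_decomposition H es")
  ultimately have sim: "similar_mat_wit H B P Q" and "upper_triangular B" and diag: "diag_mat B = es"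
    using schur_decomposition[OF H] by blast+
  moreover have B: "B \<in> carrier_mat n n"
    using similar_mat_witD2[OF H sim] by simp
  moreover have "B $$ (i, i) = lam (Suc i)" if "i < n" for i
    using arg_cong[OF diag, of "\<lambda>xs. xs ! i"] B that
    by (simp add: diag_mat_def es_def del: upt_Suc)
  ultimately show ?thesis
    using that by blast
qed

section \<open>The one-step bound\<close>

lemma trace_step_bounds:
  fixes x T :: real
  assumes "0 \<le> x" "x \<le> T"
  shows "0 \<le> x - x\<^sup>2 / T \<and> x - x\<^sup>2 / T \<le> x"
proof (cases "T = 0")
  case False
  with assms have "x\<^sup>2 \<le> x * T" "0 < T"
    by (auto simp: power2_eq_square mult_left_mono)
  then show ?thesis
    using assms by (simp add: field_simps)
qed (simp add: assms)

definition eta_step :: "nat \<Rightarrow> real \<Rightarrow> real \<Rightarrow> real" where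
  "eta_step q S x = x - x\<^sup>2 / (real q * x + S)"

lemma eta_step_nonneg:
  assumes "1 \<le> q" "0 \<le> S" "0 \<le> x"
  shows "0 \<le> eta_step q S x"
proof -
  have "x \<le> real q * x + S"
    using assms mult_right_mono[of 1 "real q" x] by simp
  then show ?thesis
    using trace_step_bounds[of x "real q * x + S"] assms unfolding eta_step_def by simp
qed

lemma eta_step_mono:
  assumes q: "1 \<le> q" and S: "0 \<le> S" and x: "0 \<le> x" and xy: "x \<le> y"
  shows "eta_step q S x \<le> eta_step q S y"
proof (cases "real q * x + S = 0")
  case True
  then have "x = 0"
    using q S x by (auto simp: add_nonneg_eq_0_iff)
  then show ?thesis
    using eta_step_nonneg[OF q S] x xy by (simp add: eta_step_def)
next
  case False
  define A B where "A = real q * x + S" and "B = real q * y + S"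
  have "0 \<le> real q * x" "real q * x \<le> real q * y"
    using x xy by (simp_all add: mult_left_mono)
  then have A: "0 < A" and B: "0 < B"
    using False S unfolding A_def B_def by linarith+
  have key: "y\<^sup>2 * A - x\<^sup>2 * B = (y - x) * (real q * x * y + S * (x + y))"
    unfolding A_def B_def by (simp add: algebra_simps power2_eq_square)
  have "0 \<le> (real q - 1) * (real q * x * y)" "0 \<le> (real q - 1) * (S * (x + y))"
    using q S x xy by auto
  moreover have "A * B = real q * x * y + S * (x + y)
      + (real q - 1) * (real q * x * y) + (real q - 1) * (S * (x + y)) + S\<^sup>2"
    unfolding A_def B_def by (simp add: algebra_simps power2_eq_square)
  ultimately have "real q * x * y + S * (x + y) \<le> A * B"
    using zero_le_power2[of S] by linarith
  then have "y\<^sup>2 * A - x\<^sup>2 * B \<le> (y - x) * (A * B)"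
    unfolding key using xy by (intro mult_left_mono) auto
  then have "y\<^sup>2 / B - x\<^sup>2 / A \<le> y - x"
    using A B by (simp add: field_simps)
  then show ?thesis
    unfolding eta_step_def A_def[symmetric] B_def[symmetric] by simp
qed

lemma trace_step_le_eta_step:
  fixes x :: "nat \<Rightarrow> real"
  assumes nonneg: "\<And>j. j < n \<Longrightarrow> 0 \<le> x j" and q: "q \<le> n"
    and tail: "(\<Sum>j\<in>{q..<n}. x j) \<le> S" and i: "i < n"
  shows "x i - (x i)\<^sup>2 / (\<Sum>j<n. x j) \<le> eta_step q S (Max (x ` {..<n}))"
proof -
  define T m where "T = (\<Sum>j<n. x j)" and "m = Max (x ` {..<n})"
  have le_m: "x j \<le> m" if "j < n" for j
    unfolding m_def using that by (intro Max_ge) auto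
  have "m \<in> x ` {..<n}"
    unfolding m_def using i by (intro Max_in) auto
  then obtain k where k: "k < n" "x k = m"
    by auto
  have le_T: "(\<Sum>j\<in>J. x j) \<le> T" if "J \<subseteq> {..<n}" for J
    unfolding T_def using that nonneg by (intro sum_mono2) auto
  have T_le: "T \<le> real q * m + S"
  proof -
    have "T = (\<Sum>j<q. x j) + (\<Sum>j\<in>{q..<n}. x j)"
      unfolding T_def using q by (simp add: lessThan_atLeast0 sum.atLeastLessThan_concat)
    also have "(\<Sum>j<q. x j) \<le> real q * m"
      using sum_mono[of "{..<q}" x "\<lambda>_. m"] le_m q by simp
    finally show ?thesis
      using tail by simp
  qed
  show ?thesis
  proof (cases "T = 0")
    case True
    then have "x k = 0" "x i = 0"
      using le_T[of "{k}"] le_T[of "{i}"] nonneg k i by force+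
    then show ?thesis
      unfolding m_def[symmetric] using k by (simp add: eta_step_def)
  next
    case False
    then have T: "0 < T"
      using le_T[of "{}"] by simp
    have "x i - (x i)\<^sup>2 / T \<le> m - m\<^sup>2 / T"
    proof (cases "i = k")
      case False
      then have "x i + m \<le> T"
        using le_T[of "{i, k}"] i k by simp
      then have "0 \<le> (m - x i) * (T - m - x i) / T"
        using le_m[OF i] T by simp
      also have "\<dots> = (m - m\<^sup>2 / T) - (x i - (x i)\<^sup>2 / T)"
        using T by (simp add: field_simps power2_eq_square)
      finally show ?thesis
        by simp
    qed (use k in simp)
    also have "m\<^sup>2 / (real q * m + S) \<le> m\<^sup>2 / T"
      using T T_le by (intro divide_left_mono) auto
    then have "m - m\<^sup>2 / T \<le> eta_step q S m"
      unfolding eta_step_def by simp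
    finally show ?thesis
      unfolding T_def m_def .
  qed
qed

lemma funpow_Phi_upper_triangular:
  assumes U: "U \<in> carrier_mat n n" "upper_triangular U"
    and nonneg: "\<And>i. i < n \<Longrightarrow> 0 \<le> U $$ (i, i)"
  shows "(Phi ^^ r) U \<in> carrier_mat n n \<and> upper_triangular ((Phi ^^ r) U)
    \<and> (\<forall>i<n. 0 \<le> (Phi ^^ r) U $$ (i, i) \<and> (Phi ^^ r) U $$ (i, i) \<le> U $$ (i, i))"
proof (induction r)
  case 0
  then show ?case
    using U nonneg by simp
next
  case (Suc r)
  define V where "V = (Phi ^^ r) U"
  have V: "V \<in> carrier_mat n n" "upper_triangular V"
    and bounds: "\<And>i. i < n \<Longrightarrow> 0 \<le> V $$ (i, i) \<and> V $$ (i, i) \<le> U $$ (i, i)"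
    using Suc.IH unfolding V_def by auto
  have "0 \<le> Phi V $$ (i, i) \<and> Phi V $$ (i, i) \<le> V $$ (i, i)" if i: "i < n" for i
  proof -
    have "V $$ (i, i) \<le> (\<Sum>j<n. V $$ (j, j))"
      using bounds i by (intro member_le_sum) auto
    then show ?thesis
      using bounds[OF i] Phi_upper_triangular(3)[OF V i] trace_step_bounds by simp
  qed
  then show ?case
    using Phi_upper_triangular(1,2)[OF V] bounds unfolding V_def by fastforce
qed

lemma lambda_max_upper_triangular_nonneg:
  assumes "U \<in> carrier_mat n n" "upper_triangular U" "0 < n"
    and "\<And>i. i < n \<Longrightarrow> 0 \<le> U $$ (i, i)"
  shows "0 \<le> lambda_max U"
proof -
  have "U $$ (0, 0) \<le> Max ((\<lambda>i. U $$ (i, i)) ` {..<n})"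
    using assms by (intro Max_ge) auto
  then show ?thesis
    using assms(3) assms(4)[of 0] lambda_max_upper_triangular[OF assms(1,2)] by linarith
qed

lemma lambda_max_Phi_le_eta_step:
  assumes U: "U \<in> carrier_mat n n" "upper_triangular U" and n: "0 < n"
    and nonneg: "\<And>i. i < n \<Longrightarrow> 0 \<le> U $$ (i, i)"
    and q: "q \<le> n" and tail: "(\<Sum>i\<in>{q..<n}. U $$ (i, i)) \<le> S"
  shows "lambda_max (Phi U) \<le> eta_step q S (lambda_max U)"
proof -
  have "Phi U $$ (i, i) \<le> eta_step q S (lambda_max U)" if "i < n" for i
    using trace_step_le_eta_step[of n "\<lambda>i. U $$ (i, i)", OF nonneg q tail that]
    by (simp add: Phi_upper_triangular(3)[OF U that] lambda_max_upper_triangular[OF U])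
  then show ?thesis
    unfolding lambda_max_upper_triangular[OF Phi_upper_triangular(1,2)[OF U]]
    using n by (intro Max.boundedI) auto
qed

lemma lambda_max_funpow_Phi_le_eta_step:
  fixes H :: "real mat"
  assumes H: "H \<in> carrier_mat n n"
    and lam_sorted: "\<And>i j. 1 \<le> i \<Longrightarrow> i \<le> j \<Longrightarrow> j \<le> n \<Longrightarrow> lam j \<le> lam i"
    and lam_nonneg: "\<And>i. 1 \<le> i \<Longrightarrow> i \<le> n \<Longrightarrow> lam i \<ge> 0"
    and lam_eigs: "char_poly H = (\<Prod>l=1..n. [:- lam l, 1:])"
    and q: "1 \<le> q" "q \<le> n"
  shows "lambda_max H = lam 1"
    and "0 \<le> lambda_max ((Phi ^^ r) H)"
    and "lambda_max ((Phi ^^ Suc r) H) \<le> eta_step q (\<Sum>l=q+1..n. lam l) (lambda_max ((Phi ^^ r) H))"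
proof -
  obtain B P Q where sim: "similar_mat_wit H B P Q" and B: "B \<in> carrier_mat n n" "upper_triangular B"
    and B_diag: "\<And>i. i < n \<Longrightarrow> B $$ (i, i) = lam (Suc i)"
    using schur_decomposition_diag[OF H lam_eigs] by blast
  have diag_nonneg: "\<And>i. i < n \<Longrightarrow> 0 \<le> B $$ (i, i)"
    using B_diag lam_nonneg by simp
  have lambda_max_B: "lambda_max ((Phi ^^ r) H) = lambda_max ((Phi ^^ r) B)" for r
    using similar_mat_wit_funpow_Phi[OF sim, of r]
    by (intro lambda_max_similar) (auto simp: similar_mat_def)
  note Br = funpow_Phi_upper_triangular[OF B diag_nonneg]
  have "Max ((\<lambda>i. lam (Suc i)) ` {..<n}) = lam 1"
    using q lam_sorted by (intro Max_eqI) auto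
  then show "lambda_max H = lam 1"
    using lambda_max_B[of 0] B B_diag by (simp add: lambda_max_upper_triangular)
  show "0 \<le> lambda_max ((Phi ^^ r) H)"
    unfolding lambda_max_B using Br q by (intro lambda_max_upper_triangular_nonneg) auto
  have "(\<Sum>i\<in>{q..<n}. (Phi ^^ r) B $$ (i, i)) \<le> (\<Sum>i\<in>{q..<n}. lam (Suc i))"
    using Br[of r] B_diag by (intro sum_mono) auto
  also have "\<dots> = (\<Sum>l=q+1..n. lam l)"
    using sum.shift_bounds_nat_ivl[of lam q 1 n] by (simp add: atLeastLessThanSuc_atLeastAtMost)
  finally have "lambda_max (Phi ((Phi ^^ r) B)) \<le> eta_step q (\<Sum>l=q+1..n. lam l) (lambda_max ((Phi ^^ r) B))"
    using Br[of r] q by (intro lambda_max_Phi_le_eta_step[where n = n]) auto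
  then show "lambda_max ((Phi ^^ Suc r) H) \<le> eta_step q (\<Sum>l=q+1..n. lam l) (lambda_max ((Phi ^^ r) H))"
    using lambda_max_B[of "Suc r"] lambda_max_B[of r] by simp
qed

section \<open>Solutions of the ODE\<close>

text \<open>V' e = -(q e + S) / e^2 is the reciprocal of the right-hand side of the ODE, so V measures,
  up to a constant, the time a solution needs to reach e.\<close>

definition flow_time :: "nat \<Rightarrow> real \<Rightarrow> real \<Rightarrow> real" where
  "flow_time q S e = S / e - real q * ln e"

lemma flow_time_has_derivative:
  assumes "0 < e"
  shows "(flow_time q S has_real_derivative - (real q * e + S) / e\<^sup>2) (at e)"
  unfolding flow_time_def using assms
  by (auto intro!: derivative_eq_intros simp: field_simps power2_eq_square)

lemma flow_time_strict_antimono: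
  assumes "1 \<le> q" "0 \<le> S" "0 < x" "x < y"
  shows "flow_time q S y < flow_time q S x"
proof (rule DERIV_neg_imp_decreasing[OF \<open>x < y\<close>])
  fix z assume "x \<le> z" "z \<le> y"
  then have "0 < z" "0 < real q * z + S"
    using assms by (auto intro: add_pos_nonneg)
  then have "- (real q * z + S) / z\<^sup>2 < 0"
    by (intro divide_neg_pos) auto
  then show "\<exists>d. (flow_time q S has_real_derivative d) (at z) \<and> d < 0"
    using flow_time_has_derivative[OF \<open>0 < z\<close>] by blast
qed

lemma flow_time_eta_step:
  assumes q: "1 \<le> q" and S: "0 \<le> S" and a: "0 < a" and step: "0 < eta_step q S a"
  shows "flow_time q S a + 1 \<le> flow_time q S (eta_step q S a)"
proof -
  define b where "b = eta_step q S a"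
  have D: "0 < real q * a + S"
    using q S a by (auto intro: add_pos_nonneg)
  have ab: "a - b = a\<^sup>2 / (real q * a + S)"
    unfolding b_def eta_step_def by simp
  moreover have "0 < a\<^sup>2 / (real q * a + S)"
    using D a by simp
  ultimately have "b < a"
    by linarith
  obtain z where z: "b < z" "z < a"
    and mvt: "flow_time q S a - flow_time q S b = (a - b) * (- (real q * z + S) / z\<^sup>2)"
    using MVT2[OF \<open>b < a\<close>, of "flow_time q S" "\<lambda>z. - (real q * z + S) / z\<^sup>2"]
      step flow_time_has_derivative unfolding b_def by fastforce
  have "0 < z"
    using z step unfolding b_def by simp
  have one: "(a - b) * ((real q * a + S) / a\<^sup>2) = 1"
    using ab D a by simp
  have "(real q * a + S) / a\<^sup>2 = real q / a + S / a\<^sup>2"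
    using a by (simp add: field_simps power2_eq_square)
  also have "\<dots> \<le> real q / z + S / z\<^sup>2"
    using \<open>0 < z\<close> z S by (intro add_mono divide_left_mono power_mono mult_pos_pos) auto
  also have "\<dots> = (real q * z + S) / z\<^sup>2"
    using \<open>0 < z\<close> by (simp add: field_simps power2_eq_square)
  finally have "(a - b) * ((real q * a + S) / a\<^sup>2) \<le> (a - b) * ((real q * z + S) / z\<^sup>2)"
    using \<open>b < a\<close> by (intro mult_left_mono) auto
  with one have "1 \<le> (a - b) * ((real q * z + S) / z\<^sup>2)"
    by linarith
  moreover have "(a - b) * (- (real q * z + S) / z\<^sup>2) = - ((a - b) * ((real q * z + S) / z\<^sup>2))"
    by (simp only: minus_divide_left[symmetric] mult_minus_right)
  ultimately show ?thesis
    using mvt unfolding b_def by linarith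
qed

lemma exp_le_of_flow_time_le:
  assumes "1 \<le> q" "0 \<le> S" "0 < e" "flow_time q S e \<le> c"
  shows "exp (- c / real q) \<le> e"
proof -
  have "0 \<le> S / e"
    using assms by simp
  then have "- c \<le> real q * ln e"
    using assms(4) unfolding flow_time_def by linarith
  then have "- c / real q \<le> ln e"
    using assms divide_right_mono[of "- c" "real q * ln e" "real q"] by simp
  then show ?thesis
    using assms by (metis exp_le_cancel_iff exp_ln)
qed

locale eta_solution =
  fixes q :: nat and S :: real and eta :: "real \<Rightarrow> real"
  assumes q_pos: "1 \<le> q" and S_nonneg: "0 \<le> S"
    and ode: "\<And>t. t \<ge> 0 \<Longrightarrow>
      (eta has_real_derivative (- (eta t)\<^sup>2 / (real q * eta t + S))) (at t within {0..})"
begin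

lemma solution_continuous: "continuous_on {0..} eta"
  unfolding continuous_on_eq_continuous_within using ode by (auto intro: DERIV_continuous)

lemma flow_time_solution:
  assumes pos: "\<And>u. 0 \<le> u \<Longrightarrow> u < s \<Longrightarrow> 0 < eta u" and u: "0 \<le> u" "u < s"
  shows "flow_time q S (eta u) = flow_time q S (eta 0) + u"
proof -
  have deriv: "((\<lambda>u. flow_time q S (eta u) - u) has_real_derivative 0) (at u within {0..<s})"
    if u: "u \<in> {0..<s}" for u
  proof -
    have e: "0 < eta u" "0 < real q * eta u + S"
      using pos u q_pos S_nonneg by (auto intro: add_pos_nonneg)
    have "((\<lambda>u. flow_time q S (eta u)) has_real_derivative
        (- (real q * eta u + S) / (eta u)\<^sup>2) * (- (eta u)\<^sup>2 / (real q * eta u + S)))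
        (at u within {0..<s})"
      using u by (intro DERIV_chain2[where f = "flow_time q S" and g = eta,
            OF flow_time_has_derivative[OF e(1)]] DERIV_subset[OF ode]) auto
    moreover have "(- (real q * eta u + S) / (eta u)\<^sup>2) * (- (eta u)\<^sup>2 / (real q * eta u + S)) = 1"
      using e by (simp del: minus_add_distrib)
    ultimately show ?thesis
      by (auto intro!: derivative_eq_intros)
  qed
  obtain c where "\<forall>u\<in>{0..<s}. flow_time q S (eta u) - u = c"
    using has_field_derivative_zero_constant[OF _ deriv] by auto
  moreover have "0 \<in> {0..<s}" "u \<in> {0..<s}"
    using u by auto
  ultimately have "flow_time q S (eta u) - u = c" "flow_time q S (eta 0) - 0 = c"
    by blast+
  then show ?thesis
    by linarith
qed

lemma solution_pos:
  assumes init: "0 < eta 0" and t: "0 \<le> t"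
  shows "0 < eta t"
proof (rule ccontr)
  assume "\<not> 0 < eta t"
  define Z where "Z = {0..t} \<inter> eta -` {..0}"
  have "closed Z"
    unfolding Z_def using solution_continuous
    by (intro continuous_closed_preimage) (auto intro: continuous_on_subset)
  then have "compact Z"
    unfolding Z_def compact_eq_bounded_closed by (auto intro: bounded_subset[OF compact_imp_bounded[OF compact_Icc]])
  moreover have "t \<in> Z"
    using \<open>\<not> 0 < eta t\<close> t unfolding Z_def by auto
  ultimately obtain s where s: "s \<in> Z" and s_min: "\<And>u. u \<in> Z \<Longrightarrow> s \<le> u"
    using compact_attains_inf[of Z] by blast
  have "0 < s" "s \<le> t" "eta s \<le> 0"
    using s init unfolding Z_def by (auto simp: order.order_iff_strict)
  have pos: "0 < eta u" if "0 \<le> u" "u < s" for u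
    using s_min[of u] that \<open>s \<le> t\<close> unfolding Z_def by force
  define \<delta> where "\<delta> = exp (- (flow_time q S (eta 0) + s) / real q)"
  have lower: "\<delta> \<le> eta u" if "u \<in> {0..<s}" for u
  proof -
    have "flow_time q S (eta u) = flow_time q S (eta 0) + u"
      using that by (intro flow_time_solution[OF pos]) auto
    then have "flow_time q S (eta u) \<le> flow_time q S (eta 0) + s"
      using that by simp
    then show ?thesis
      unfolding \<delta>_def using that by (intro exp_le_of_flow_time_le[OF q_pos S_nonneg pos]) auto
  qed
  have closure: "closure {0..<s} = {0..s}"
    using \<open>0 < s\<close> by (rule closure_atLeastLessThan)
  have "continuous_on (closure {0..<s}) eta"
    unfolding closure using solution_continuous by (rule continuous_on_subset) auto
  moreover have "s \<in> closure {0..<s}"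
    unfolding closure using \<open>0 < s\<close> by simp
  ultimately have "\<delta> \<le> eta s"
    using lower by (rule continuous_ge_on_closure)
  moreover have "0 < \<delta>"
    unfolding \<delta>_def by simp
  ultimately show False
    using \<open>eta s \<le> 0\<close> by simp
qed

lemma solution_eq_0:
  assumes S: "S = 0" and init: "eta 0 = 0" and t: "0 \<le> t"
  shows "eta t = 0"
proof -
  define w where "w u = eta u * exp (u / real q)" for u
  have "(w has_real_derivative 0) (at u within {0..})" if "u \<in> {0..}" for u
  proof -
    have "((\<lambda>u. exp (u / real q)) has_real_derivative exp (u / real q) * (1 / real q))
        (at u within {0..})"
      using q_pos by (auto intro!: derivative_eq_intros)
    moreover have "(eta has_real_derivative - (eta u)\<^sup>2 / (real q * eta u)) (at u within {0..})"
      using ode[of u] that S by simp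
    ultimately have "(w has_real_derivative
        (- (eta u)\<^sup>2 / (real q * eta u)) * exp (u / real q) + exp (u / real q) * (1 / real q) * eta u)
        (at u within {0..})"
      unfolding w_def by (rule DERIV_mult[rotated])
    moreover have "(- (eta u)\<^sup>2 / (real q * eta u)) * exp (u / real q)
        + exp (u / real q) * (1 / real q) * eta u = 0"
      using q_pos by (cases "eta u = 0") (simp_all add: power2_eq_square)
    ultimately show ?thesis
      by simp
  qed
  then obtain c where "\<forall>u\<in>{0..}. w u = c"
    using has_field_derivative_zero_constant[of "{0..}" w] by auto
  then have "w t = w 0"
    using t by simp
  then show ?thesis
    using init unfolding w_def by simp
qed

text \<open>Lacking uniqueness for the ODE, a zero initial value is handled only when S = 0, where
  eta t * exp (t / q) is constant.\<close>

lemma eta_step_le_solution: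
  assumes init: "0 \<le> eta 0" and degenerate: "eta 0 = 0 \<Longrightarrow> S = 0" and t: "0 \<le> t"
  shows "eta_step q S (eta t) \<le> eta (t + 1)"
proof (cases "eta 0 = 0")
  case True
  then show ?thesis
    using solution_eq_0[OF degenerate] t by (simp add: eta_step_def)
next
  case False
  then have pos: "0 < eta u" if "0 \<le> u" for u
    using init solution_pos that by simp
  have flow_from_0: "flow_time q S (eta u) = flow_time q S (eta 0) + u" if "0 \<le> u" for u
    by (rule flow_time_solution[where s = "u + 1"]) (use pos that in auto)
  have flow: "flow_time q S (eta (t + 1)) = flow_time q S (eta t) + 1"
    using flow_from_0[of t] flow_from_0[of "t + 1"] t by simp
  show ?thesis
  proof (rule ccontr)
    assume "\<not> eta_step q S (eta t) \<le> eta (t + 1)"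
    then have "eta (t + 1) < eta_step q S (eta t)"
      by simp
    then have "flow_time q S (eta_step q S (eta t)) < flow_time q S (eta (t + 1))"
      using t by (intro flow_time_strict_antimono[OF q_pos S_nonneg pos]) auto
    moreover have "flow_time q S (eta t) + 1 \<le> flow_time q S (eta_step q S (eta t))"
      using \<open>eta (t + 1) < eta_step q S (eta t)\<close> pos[of "t + 1"] t
      by (intro flow_time_eta_step[OF q_pos S_nonneg pos[OF t]]) auto
    ultimately show False
      using flow by linarith
  qed
qed

end

lemma step_comparison:
  fixes f :: "real \<Rightarrow> real" and a b :: "nat \<Rightarrow> real"
  assumes mono: "\<And>x y. 0 \<le> x \<Longrightarrow> x \<le> y \<Longrightarrow> f x \<le> f y"
    and a_nonneg: "\<And>r. 0 \<le> a r" and a_step: "\<And>r. a (Suc r) \<le> f (a r)"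
    and b_step: "\<And>r. f (b r) \<le> b (Suc r)" and init: "a 0 \<le> b 0"
  shows "a r \<le> b r"
proof (induction r)
  case (Suc r)
  have "a (Suc r) \<le> f (a r)"
    by (rule a_step)
  also have "\<dots> \<le> f (b r)"
    using a_nonneg Suc.IH by (rule mono)
  also have "\<dots> \<le> b (Suc r)"
    by (rule b_step)
  finally show ?case .
qed (rule init)

theorem lemmaD2:
  fixes H :: "real mat" and n q :: nat and lam :: "nat \<Rightarrow> real" and eta :: "real \<Rightarrow> real"
  assumes H_carrier: "H \<in> carrier_mat n n"
    and H_sym: "transpose_mat H = H"
    and H_psd: "psd_mat H"
    and lam_sorted: "\<And>i j. 1 \<le> i \<Longrightarrow> i \<le> j \<Longrightarrow> j \<le> n \<Longrightarrow> lam j \<le> lam i"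
    and lam_nonneg: "\<And>i. 1 \<le> i \<Longrightarrow> i \<le> n \<Longrightarrow> lam i \<ge> 0"
    and lam_eigs: "char_poly H = (\<Prod>l=1..n. [:- lam l, 1:])"
    and q_range: "1 \<le> q" "q \<le> n"
    and eta_ode: "\<And>t. t \<ge> 0 \<Longrightarrow>
        (eta has_real_derivative
           (- (eta t)\<^sup>2 / (real q * eta t + (\<Sum>l=q+1..n. lam l)))) (at t within {0..})"
    and eta_init: "eta 0 = lam 1"
  shows "\<forall>r::nat. lambda_max ((Phi ^^ r) H) \<le> eta (real r)"
proof
  fix r :: nat
  define S where "S = (\<Sum>l=q+1..n. lam l)"
  note matrix_side =
    lambda_max_funpow_Phi_le_eta_step[OF H_carrier lam_sorted lam_nonneg lam_eigs q_range, folded S_def]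
  have S_nonneg: "0 \<le> S"
    unfolding S_def using lam_nonneg q_range by (intro sum_nonneg) auto
  interpret eta_solution q S eta
    using q_range S_nonneg eta_ode unfolding S_def by unfold_locales auto
  have degenerate: "S = 0" if "lam 1 = 0"
    unfolding S_def using that lam_sorted lam_nonneg q_range
    by (intro sum.neutral ballI antisym) (force, fastforce)
  have ode_side: "eta_step q S (eta (real k)) \<le> eta (real (Suc k))" for k
    using eta_step_le_solution[of "real k"] eta_init degenerate lam_nonneg[of 1] q_range
    by (simp add: add.commute)
  show "lambda_max ((Phi ^^ r) H) \<le> eta (real r)"
    by (rule step_comparison[where f = "eta_step q S"])
      (use eta_step_mono[OF q_range(1) S_nonneg] matrix_side ode_side eta_init in auto)
qed

end
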